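(* Let $d,N\ge1$, let $L>C_{\mathcal U}$, and let $\Lambda_L^{(N)}(\mathbf x)$ and $\Lambda_L^{(N)}(\mathbf y)$ be two fully interactive $N$-particle cubes. If $d_S(\mathbf x,\mathbf y)\ge 8NL$, then $\Pi\Lambda_L^{(N)}(\mathbf x)$ and $\Pi\Lambda_L^{(N)}(\mathbf y)$ are disjoint subsets of $\mathbb Z^d$.
   Context: Points of $\mathbb Z^{Nd}$ are $\mathbf x=(x_1,\dots,x_N)$, $x_j\in\mathbb Z^d$; $d_S(\mathbf x,\mathbf y)=\min_{\pi\in S_N}\|\mathbf x-\pi\mathbf y\|_\infty$ with $\pi\mathbf y=(y_{\pi(1)},\dots,y_{\pi(N)})$; $\Lambda_L^{(N)}(\mathbf a)=\{\mathbf z\in\mathbb Z^{Nd}:d_S(\mathbf z,\mathbf a)\le L\}$. For $\Theta\subseteq\mathbb Z^{Nd}$, $\Pi\Theta=\bigcup_{n=1}^N\{z_n:\mathbf z\in\Theta\}\subseteq\mathbb Z^d$. Let $\mathcal U:\mathbb Z^d\to\mathbb R$ be a finitely supported interaction and $C_{\mathcal U}=\max_{u\in\operatorname{supp}\mathcal U}\|u\|+1$. A cube $\Lambda_L^{(N)}(\mathbf x)$ is partially interactive if there exist $1\le N_1,N_2<N$ with $N_1+N_2=N$ and disjoint $\mathcal S_1,\mathcal S_2\subseteq\mathbb Z^d$ with $\operatorname{dist}(\mathcal S_1,\mathcal S_2)\ge C_{\mathcal U}$ such that for all $\mathbf z\in\Lambda_L^{(N)}(\mathbf x)$: $\#\{j:z_j\in\mathcal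 S_1\}=N_1$ and $\#\{j:z_j\in\mathcal S_2\}=N_2$. It is fully interactive if it is not partially interactive. *)

theory Defs
  imports "HOL-Analysis.Analysis" "HOL-Combinatorics.Permutations"
begin

text \<open>Sites of Z^d are \<open>int ^ 'd\<close>; N-particle configurations (points of Z^{Nd}) are
  \<open>(int ^ 'd) ^ 'n\<close>, with d = CARD('d) and N = CARD('n).\<close>

definition supn :: "int ^ 'd \<Rightarrow> int" where
  "supn u = Max (range (\<lambda>i. \<bar>u $ i\<bar>))"

definition cfg_dist :: "(int ^ 'd) ^ 'n \<Rightarrow> (int ^ 'd) ^ 'n \<Rightarrow> int" where
  "cfg_dist x y = Max (range (\<lambda>j. supn (x $ j - y $ j)))"

definition permute_cfg :: "('n \<Rightarrow> 'n) \<Rightarrow> (int ^ 'd) ^ 'n \<Rightarrow> (int ^ 'd) ^ 'n" where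
  "permute_cfg \<pi> y = (\<chi> j. y $ (\<pi> j))"

definition dS :: "(int ^ 'd) ^ 'n \<Rightarrow> (int ^ 'd) ^ 'n \<Rightarrow> int" where
  "dS x y = Min {cfg_dist x (permute_cfg \<pi> y) | \<pi>. \<pi> permutes (UNIV :: 'n set)}"

definition cube :: "nat \<Rightarrow> (int ^ 'd) ^ 'n \<Rightarrow> ((int ^ 'd) ^ 'n) set" where
  "cube L a = {z. dS z a \<le> int L}"

definition Proj :: "((int ^ 'd) ^ 'n) set \<Rightarrow> (int ^ 'd) set" where
  "Proj \<Theta> = {z $ n | z n. z \<in> \<Theta>}"

definition C_U :: "(int ^ 'd \<Rightarrow> real) \<Rightarrow> int" where
  "C_U U = Max (insert 0 (supn ` {u. U u \<noteq> 0})) + 1"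

definition partially_interactive ::
    "(int ^ 'd \<Rightarrow> real) \<Rightarrow> nat \<Rightarrow> (int ^ 'd) ^ 'n \<Rightarrow> bool" where
  "partially_interactive U L x \<longleftrightarrow>
     (\<exists>N1 N2 (S1 :: (int ^ 'd) set) S2.
        1 \<le> N1 \<and> N1 < CARD('n) \<and> 1 \<le> N2 \<and> N2 < CARD('n) \<and> N1 + N2 = CARD('n) \<and>
        S1 \<inter> S2 = {} \<and>
        (\<forall>s1\<in>S1. \<forall>s2\<in>S2. C_U U \<le> supn (s1 - s2)) \<and>
        (\<forall>z\<in>cube L x. card {j. z $ j \<in> S1} = N1 \<and> card {j. z $ j \<in> S2} = N2))"

definition fully_interactive ::
    "(int ^ 'd \<Rightarrow> real) \<Rightarrow> nat \<Rightarrow> (int ^ 'd) ^ 'n \<Rightarrow> bool" where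
  "fully_interactive U L x \<longleftrightarrow> \<not> partially_interactive U L x"

end

theory Submission imports Defs begin

text \<open>If the sites of a configuration \<open>x\<close> split into two nonempty groups at mutual distance
  at least \<open>2L + C\<^sub>U\<close>, then the \<open>L\<close>-neighbourhoods of the two groups witness that the cube around
  \<open>x\<close> is partially interactive. Hence the sites of a fully interactive centre form a chain with
  links shorter than \<open>2L + C\<^sub>U < 3L\<close>, so their diameter is below \<open>3(N - 1)L\<close>. A common point of
  both projections is within \<open>L\<close> of a site of \<open>x\<close> and of a site of \<open>y\<close>, which puts every site
  of \<open>x\<close> within \<open>2(N - 1)(2L + C\<^sub>U) + 2L < 8NL\<close> of the site of \<open>y\<close> with the same index.\<close>

lemma component_le_supn: "\<bar>u $ i\<bar> \<le> supn u"
  unfolding supn_def by (rule Max_ge) auto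

lemma supn_le_iff: "supn u \<le> c \<longleftrightarrow> (\<forall>i. \<bar>u $ i\<bar> \<le> c)"
  unfolding supn_def by (subst Max_le_iff) auto

lemma supn_zero [simp]: "supn 0 = 0"
  unfolding supn_def by simp

lemma supn_triangle: "supn (a + b) \<le> supn a + supn b"
  unfolding supn_le_iff
proof
  fix i
  show "\<bar>(a + b) $ i\<bar> \<le> supn a + supn b"
    using component_le_supn[of a i] component_le_supn[of b i] by simp
qed

lemma supn_diff_commute: "supn (a - b) = supn (b - a)"
proof -
  have "supn (a - b) \<le> supn (b - a)" for a b :: "int ^ 'd"
    unfolding supn_le_iff by (metis component_le_supn abs_minus_commute vector_minus_component)
  then show ?thesis by (meson order_antisym)
qed

lemma supn_diff_triangle: "supn (a - c) \<le> supn (a - b) + supn (b - c)"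
  using supn_triangle[of "a - b" "b - c"] by simp

lemma supn_diff_ge_of_near:
  assumes "supn (s - a) \<le> r" and "supn (t - b) \<le> r"
  shows "supn (a - b) - 2 * r \<le> supn (s - t)"
  using supn_diff_triangle[of a b s] supn_diff_triangle[of s b t]
    supn_diff_commute[of a s] assms by linarith

lemma C_U_ge_1: "finite {u. U u \<noteq> 0} \<Longrightarrow> 1 \<le> C_U U"
  unfolding C_U_def by (simp add: Max_ge)

lemma cfg_dist_le_iff: "cfg_dist x y \<le> c \<longleftrightarrow> (\<forall>j. supn (x $ j - y $ j) \<le> c)"
  unfolding cfg_dist_def by (subst Max_le_iff) auto

lemma finite_permuted_cfg_dists:
  "finite {cfg_dist x (permute_cfg \<pi> y) | \<pi>. \<pi> permutes (UNIV :: 'n::finite set)}"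
proof -
  have "{cfg_dist x (permute_cfg \<pi> y) | \<pi>. \<pi> permutes (UNIV :: 'n set)} =
      (\<lambda>\<pi>. cfg_dist x (permute_cfg \<pi> y)) ` {\<pi>. \<pi> permutes UNIV}"
    by auto
  then show ?thesis using finite_permutations by simp
qed

lemma dS_le_cfg_dist: "dS x y \<le> cfg_dist x (y :: (int ^ 'd) ^ 'n::finite)"
proof -
  have "cfg_dist x y = cfg_dist x (permute_cfg id y)"
    by (simp add: permute_cfg_def)
  then have "cfg_dist x y \<in> {cfg_dist x (permute_cfg \<pi> y) | \<pi>. \<pi> permutes (UNIV :: 'n set)}"
    using permutes_id by blast
  then show ?thesis
    unfolding dS_def by (rule Min_le[OF finite_permuted_cfg_dists])
qed

lemma dS_attained:
  fixes z a :: "(int ^ 'd) ^ 'n::finite"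
  obtains \<pi> where "\<pi> permutes UNIV" and "\<And>j. supn (z $ j - a $ \<pi> j) \<le> dS z a"
proof -
  have "dS z a \<in> {cfg_dist z (permute_cfg \<pi> a) | \<pi>. \<pi> permutes (UNIV :: 'n set)}"
    unfolding dS_def using permutes_id by (intro Min_in[OF finite_permuted_cfg_dists]) blast
  then obtain \<pi> where \<pi>: "\<pi> permutes UNIV" and "dS z a = cfg_dist z (permute_cfg \<pi> a)"
    by auto
  then have "\<And>j. supn (z $ j - a $ \<pi> j) \<le> dS z a"
    using cfg_dist_le_iff[of z "permute_cfg \<pi> a" "dS z a"] by (simp add: permute_cfg_def)
  with \<pi> show ?thesis by (rule that)
qed

lemma mem_cubeE:
  assumes "z \<in> cube L a"
  obtains \<pi> where "\<pi> permutes UNIV" and "\<And>j. supn (z $ j - a $ \<pi> j) \<le> int L"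
  using assms unfolding cube_def by (metis dS_attained mem_Collect_eq order_trans)

lemma mem_Proj_cubeE:
  assumes "p \<in> Proj (cube L a)"
  obtains i where "supn (p - a $ i) \<le> int L"
  using assms unfolding Proj_def by (blast elim: mem_cubeE)

lemma partially_interactive_if_split:
  fixes x :: "(int ^ 'd) ^ 'n::finite"
  assumes fin: "finite {u. U u \<noteq> 0}"
    and J: "J \<noteq> {}" "J \<noteq> UNIV"
    and far: "\<And>i j. i \<in> J \<Longrightarrow> j \<notin> J \<Longrightarrow> 2 * int L + C_U U \<le> supn (x $ i - x $ j)"
  shows "partially_interactive U L x"
proof -
  define S1 where "S1 = {p. \<exists>i\<in>J. supn (p - x $ i) \<le> int L}"
  define S2 where "S2 = {p. \<exists>i\<in>-J. supn (p - x $ i) \<le> int L}"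
  have sep: "C_U U \<le> supn (s1 - s2)" if "s1 \<in> S1" and "s2 \<in> S2" for s1 s2
  proof -
    obtain i j where "i \<in> J" "j \<notin> J" "supn (s1 - x $ i) \<le> int L" "supn (s2 - x $ j) \<le> int L"
      using \<open>s1 \<in> S1\<close> \<open>s2 \<in> S2\<close> unfolding S1_def S2_def by auto
    then show ?thesis
      using far[of i j] supn_diff_ge_of_near[of s1 "x $ i" "int L" s2 "x $ j"] by linarith
  qed
  have disj: "S1 \<inter> S2 = {}"
  proof -
    have "\<not> C_U U \<le> supn (s - s)" for s :: "int ^ 'd"
      using C_U_ge_1[OF fin] by simp
    then show ?thesis using sep by blast
  qed
  have counts: "card {j. z $ j \<in> S1} = card J \<and> card {j. z $ j \<in> S2} = card (-J)"
    if "z \<in> cube L x" for z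
  proof -
    obtain \<pi> where \<pi>: "\<pi> permutes UNIV" "\<And>j. supn (z $ j - x $ \<pi> j) \<le> int L"
      using mem_cubeE[OF \<open>z \<in> cube L x\<close>] by metis
    have "z $ j \<in> (if \<pi> j \<in> J then S1 else S2)" for j
      using \<pi>(2)[of j] unfolding S1_def S2_def by auto
    with disj have "z $ j \<in> S1 \<longleftrightarrow> \<pi> j \<in> J" and "z $ j \<in> S2 \<longleftrightarrow> \<pi> j \<notin> J" for j
      by (metis IntI empty_iff)+
    then have "{j. z $ j \<in> S1} = \<pi> -` J" and "{j. z $ j \<in> S2} = \<pi> -` (-J)"
      by auto
    moreover have "inj \<pi>" and "surj \<pi>"
      using \<pi>(1) by (auto dest: permutes_bij bij_is_inj bij_is_surj)
    ultimately show ?thesis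
      by (simp add: card_vimage_inj)
  qed
  have "card J + card (-J) = CARD('n)"
    using card_Un_disjoint[of J "-J"] by (simp add: Compl_partition)
  moreover have "J \<noteq> {}" and "-J \<noteq> {}"
    using J by auto
  then have "1 \<le> card J" and "1 \<le> card (-J)"
    by (simp_all add: Suc_le_eq card_gt_0_iff)
  ultimately show ?thesis
    unfolding partially_interactive_def using disj sep counts
    by (intro exI[of _ "card J"] exI[of _ "card (-J)"] exI[of _ S1] exI[of _ S2] conjI ballI) auto
qed

text \<open>The balls of radius \<open>mD\<close> around \<open>p k\<close> gain an index at every step until they cover
  all of \<open>'n\<close>, so radius \<open>(|'n| - 1)D\<close> suffices.\<close>
lemma supn_diameter_le_if_linked:
  fixes p :: "'n::finite \<Rightarrow> int ^ 'd"
  assumes "0 \<le> D"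
    and linked: "\<And>J. J \<noteq> {} \<Longrightarrow> J \<noteq> UNIV \<Longrightarrow> \<exists>i\<in>J. \<exists>j\<in>-J. supn (p i - p j) \<le> D"
  shows "supn (p i - p k) \<le> int (CARD('n) - 1) * D"
proof -
  define B where "B m = {i. supn (p i - p k) \<le> int m * D}" for m
  have k_in_B: "k \<in> B m" for m
    using \<open>0 \<le> D\<close> by (simp add: B_def)
  have B_mono: "B m \<subseteq> B (Suc m)" for m
    using \<open>0 \<le> D\<close> by (auto simp: B_def algebra_simps)
  have growth: "B m = UNIV \<or> m + 1 \<le> card (B m)" for m
  proof (induction m)
    case 0
    show ?case using k_in_B[of 0] by (auto simp: Suc_le_eq card_gt_0_iff)
  next
    case (Suc m)
    show ?case
    proof (cases "B m = UNIV")
      case True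
      then show ?thesis using B_mono[of m] by auto
    next
      case False
      then obtain i j where "i \<in> B m" "j \<notin> B m" "supn (p i - p j) \<le> D"
        using linked[of "B m"] k_in_B by blast
      then have "j \<in> B (Suc m) - B m"
        using supn_diff_triangle[of "p j" "p k" "p i"] supn_diff_commute[of "p j" "p i"]
        by (auto simp: B_def algebra_simps)
      then have "card (B m) < card (B (Suc m))"
        using B_mono[of m] by (intro psubset_card_mono) auto
      then show ?thesis using Suc False by auto
    qed
  qed
  have "B (CARD('n) - 1) = UNIV"
  proof (rule ccontr)
    assume "B (CARD('n) - 1) \<noteq> UNIV"
    with growth[of "CARD('n) - 1"] have "card (UNIV :: 'n set) \<le> card (B (CARD('n) - 1))"
      by simp
    with \<open>B (CARD('n) - 1) \<noteq> UNIV\<close> show False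
      by (metis card_seteq finite subset_UNIV)
  qed
  then show ?thesis by (auto simp: B_def)
qed

lemma fully_interactive_diameter:
  fixes x :: "(int ^ 'd) ^ 'n::finite"
  assumes fin: "finite {u. U u \<noteq> 0}" and "fully_interactive U L x"
  shows "supn (x $ i - x $ k) \<le> int (CARD('n) - 1) * (2 * int L + C_U U)"
proof (rule supn_diameter_le_if_linked)
  show "0 \<le> 2 * int L + C_U U"
    using C_U_ge_1[OF fin] by simp
  fix J :: "'n set"
  assume "J \<noteq> {}" "J \<noteq> UNIV"
  show "\<exists>i\<in>J. \<exists>j\<in>-J. supn (x $ i - x $ j) \<le> 2 * int L + C_U U"
  proof (rule ccontr)
    assume "\<not> ?thesis"
    then have "2 * int L + C_U U \<le> supn (x $ i - x $ j)" if "i \<in> J" and "j \<notin> J" for i j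
      using that by force
    then have "partially_interactive U L x"
      by (rule partially_interactive_if_split[OF fin \<open>J \<noteq> {}\<close> \<open>J \<noteq> UNIV\<close>])
    with \<open>fully_interactive U L x\<close> show False
      unfolding fully_interactive_def by blast
  qed
qed

lemma cfg_dist_le_via_common_site:
  assumes "supn (s - x $ i) \<le> r" and "supn (s - y $ k) \<le> r"
    and "\<And>j. supn (x $ j - x $ i) \<le> R" and "\<And>j. supn (y $ k - y $ j) \<le> R"
  shows "cfg_dist x y \<le> 2 * R + 2 * r"
  unfolding cfg_dist_le_iff
proof
  fix j
  have "supn (x $ j - y $ j) \<le> supn (x $ j - x $ i) + supn (x $ i - s) + supn (s - y $ k)
      + supn (y $ k - y $ j)"
    using supn_diff_triangle[of "x $ j" "y $ j" "x $ i"] supn_diff_triangle[of "x $ i" "y $ j" s]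
      supn_diff_triangle[of s "y $ j" "y $ k"] by linarith
  then show "supn (x $ j - y $ j) \<le> 2 * R + 2 * r"
    using assms(1,2) assms(3,4)[of j] supn_diff_commute[of "x $ i" s] by linarith
qed

theorem lemma3p5:
  fixes U :: "int ^ 'd \<Rightarrow> real"
    and x y :: "(int ^ 'd) ^ 'n"
    and L :: nat
  assumes "finite {u. U u \<noteq> 0}"
    and "int L > C_U U"
    and "fully_interactive U L x"
    and "fully_interactive U L y"
    and "dS x y \<ge> 8 * int CARD('n) * int L"
  shows "Proj (cube L x) \<inter> Proj (cube L y) = {}"
proof (rule ccontr)
  assume "Proj (cube L x) \<inter> Proj (cube L y) \<noteq> {}"
  then obtain s i k where "supn (s - x $ i) \<le> int L" "supn (s - y $ k) \<le> int L"
    by (blast elim: mem_Proj_cubeE)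
  moreover define R where "R = int (CARD('n) - 1) * (2 * int L + C_U U)"
  ultimately have "cfg_dist x y \<le> 2 * R + 2 * int L"
    using fully_interactive_diameter[OF assms(1) assms(3)] fully_interactive_diameter[OF assms(1) assms(4)]
    by (intro cfg_dist_le_via_common_site) (auto simp: R_def)
  moreover have "2 * R + 2 * int L < 8 * int CARD('n) * int L"
  proof -
    have "R \<le> int (CARD('n) - 1) * (3 * int L)"
      unfolding R_def using assms(2) by (intro mult_left_mono) auto
    also have "\<dots> = 3 * int CARD('n) * int L - 3 * int L"
      by (simp add: of_nat_diff algebra_simps)
    finally have "R \<le> 3 * int CARD('n) * int L - 3 * int L" .
    moreover have "0 < int L"
      using C_U_ge_1[OF assms(1)] assms(2) by simp
    moreover have "0 \<le> int CARD('n) * int L"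
      by simp
    ultimately show ?thesis
      by linarith
  qed
  ultimately show False
    using dS_le_cfg_dist[of x y] assms(5) by linarith
qed

end
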